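(* Any Schur positive connected bipartite graph has a balanced stable bipartition, namely, the cardinalities of the two parts differ by $1$ or $0$.
   Context: A graph $G$ is Schur positive if its chromatic symmetric function $X_G=\sum_{\kappa}\prod_{v\in V(G)}x_{\kappa(v)}$ (sum over proper colorings $\kappa$) has nonnegative coefficients in the Schur basis. A stable bipartition of $G$ is a partition of $V(G)$ into two stable (independent) sets. *)

theory Defs
  imports Main "HOL-Library.FuncSet"
begin

definition simple_graph :: "'a set \<Rightarrow> ('a \<Rightarrow> 'a \<Rightarrow> bool) \<Rightarrow> bool" where
  "simple_graph V E \<longleftrightarrow> finite V \<and>
     (\<forall>u v. E u v \<longrightarrow> u \<in> V \<and> v \<in> V \<and> u \<noteq> v \<and> E v u)"

definition connected_graph :: "'a set \<Rightarrow> ('a \<Rightarrow> 'a \<Rightarrow> bool) \<Rightarrow> bool" where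
  "connected_graph V E \<longleftrightarrow> (\<forall>u\<in>V. \<forall>v\<in>V. E\<^sup>*\<^sup>* u v)"

definition stable_set :: "'a set \<Rightarrow> ('a \<Rightarrow> 'a \<Rightarrow> bool) \<Rightarrow> 'a set \<Rightarrow> bool" where
  "stable_set V E S \<longleftrightarrow> S \<subseteq> V \<and> (\<forall>u\<in>S. \<forall>v\<in>S. \<not> E u v)"

definition stable_bipartition :: "'a set \<Rightarrow> ('a \<Rightarrow> 'a \<Rightarrow> bool) \<Rightarrow> 'a set \<Rightarrow> 'a set \<Rightarrow> bool" where
  "stable_bipartition V E A B \<longleftrightarrow> A \<union> B = V \<and> A \<inter> B = {} \<and>
     stable_set V E A \<and> stable_set V E B"

definition bipartite :: "'a set \<Rightarrow> ('a \<Rightarrow> 'a \<Rightarrow> bool) \<Rightarrow> bool" where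
  "bipartite V E \<longleftrightarrow> (\<exists>A B. stable_bipartition V E A B)"

text \<open>A formal power series in the variables x_0, x_1, ... is represented by its coefficient
  function on exponent vectors alpha :: nat \<Rightarrow> nat (x^alpha = prod_i x_i^(alpha i)).\<close>

definition proper_coloring :: "'a set \<Rightarrow> ('a \<Rightarrow> 'a \<Rightarrow> bool) \<Rightarrow> ('a \<Rightarrow> nat) \<Rightarrow> bool" where
  "proper_coloring V E \<kappa> \<longleftrightarrow> (\<forall>u\<in>V. \<forall>v\<in>V. E u v \<longrightarrow> \<kappa> u \<noteq> \<kappa> v)"

text \<open>Coefficient of x^alpha in the chromatic symmetric function X_G: the number of proper
  colourings kappa : V \<rightarrow> nat with exactly alpha i vertices of colour i, for all i.\<close>
definition chrom_sym_coeff :: "'a set \<Rightarrow> ('a \<Rightarrow> 'a \<Rightarrow> bool) \<Rightarrow> (nat \<Rightarrow> nat) \<Rightarrow> int" where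
  "chrom_sym_coeff V E \<alpha> = int (card {\<kappa> \<in> V \<rightarrow>\<^sub>E (UNIV :: nat set).
       proper_coloring V E \<kappa> \<and> (\<forall>i. card {v \<in> V. \<kappa> v = i} = \<alpha> i)})"

definition partitions_of :: "nat \<Rightarrow> nat list set" where
  "partitions_of n = {la. sorted (rev la) \<and> 0 \<notin> set la \<and> sum_list la = n}"

definition young_cells :: "nat list \<Rightarrow> (nat \<times> nat) set" where
  "young_cells la = {(i, j). i < length la \<and> j < la ! i}"

definition ssyt :: "nat list \<Rightarrow> ((nat \<times> nat) \<Rightarrow> nat) \<Rightarrow> bool" where
  "ssyt la T \<longleftrightarrow> T \<in> young_cells la \<rightarrow>\<^sub>E (UNIV :: nat set) \<and>
     (\<forall>i j. (i, j + 1) \<in> young_cells la \<longrightarrow> T (i, j) \<le> T (i, j + 1)) \<and>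
     (\<forall>i j. (i + 1, j) \<in> young_cells la \<longrightarrow> T (i, j) < T (i + 1, j))"

text \<open>Coefficient of x^alpha in the Schur function s_lambda (the Kostka number K_{lambda,alpha}):
  number of SSYT of shape lambda with content alpha.\<close>
definition schur_coeff :: "nat list \<Rightarrow> (nat \<Rightarrow> nat) \<Rightarrow> int" where
  "schur_coeff la \<alpha> = int (card {T. ssyt la T \<and>
       (\<forall>k. card {c \<in> young_cells la. T c = k} = \<alpha> k)})"

text \<open>G is Schur positive: X_G is a nonnegative (integer) combination of Schur functions.
  Since X_G is homogeneous of degree |V|, only s_lambda with lambda a partition of |V| occur.\<close>
definition schur_positive :: "'a set \<Rightarrow> ('a \<Rightarrow> 'a \<Rightarrow> bool) \<Rightarrow> bool" where
  "schur_positive V E \<longleftrightarrow> (\<exists>c :: nat list \<Rightarrow> int. (\<forall>la. c la \<ge> 0) \<and>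
     (\<forall>\<alpha>. chrom_sym_coeff V E \<alpha> =
            (\<Sum>la\<in>partitions_of (card V). c la * schur_coeff la \<alpha>)))"

end

theory Submission
  imports Defs
begin

text \<open>Let \<open>(A, B)\<close> be a stable bipartition with \<open>|A| = p \<ge> q + 2 = |B| + 2\<close>. Colouring \<open>A\<close> with
  0 and \<open>B\<close> with 1 shows that \<open>x\<^sub>0\<^sup>p x\<^sub>1\<^sup>q\<close> has a positive coefficient in \<open>X\<^sub>G\<close>, while
  \<open>x\<^sub>0\<^sup>p\<^sup>-\<^sup>1 x\<^sub>1\<^sup>q\<^sup>+\<^sup>1\<close> has coefficient 0: in a connected graph a proper colouring with two colours
  is constant on the parts, so its colour classes have sizes \<open>p\<close> and \<open>q\<close>. On the Schur side,
  a Kostka number with content \<open>(p, q)\<close> is 0 or 1, and it is 1 exactly when the tableau with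
  0 in the first \<open>p\<close> cells of the first row and 1 elsewhere is semistandard; turning the last
  of these 0s into a 1 then gives a semistandard tableau of content \<open>(p - 1, q + 1)\<close>. So for
  Schur positive \<open>G\<close> the first coefficient is at most the second, a contradiction.\<close>

definition has_content :: "'b set \<Rightarrow> ('b \<Rightarrow> nat) \<Rightarrow> (nat \<Rightarrow> nat) \<Rightarrow> bool" where
  "has_content S f \<alpha> \<longleftrightarrow> (\<forall>k. card {x \<in> S. f x = k} = \<alpha> k)"

definition two_letter :: "nat \<Rightarrow> nat \<Rightarrow> nat \<Rightarrow> nat" where
  "two_letter p q k = (if k = 0 then p else if k = 1 then q else 0)"

lemma chrom_sym_coeff_eq:
  "chrom_sym_coeff V E \<alpha> =
     int (card {\<kappa> \<in> V \<rightarrow>\<^sub>E UNIV. proper_coloring V E \<kappa> \<and> has_content V \<kappa> \<alpha>})"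
  by (simp add: chrom_sym_coeff_def has_content_def)

lemma schur_coeff_eq:
  "schur_coeff la \<alpha> = int (card {T. ssyt la T \<and> has_content (young_cells la) T \<alpha>})"
  by (simp add: schur_coeff_def has_content_def)

lemma has_content_nonzero:
  assumes "finite S" "has_content S f \<alpha>" "x \<in> S"
  shows "\<alpha> (f x) \<noteq> 0"
proof -
  have "x \<in> {y \<in> S. f y = f x}" using assms(3) by simp
  then have "card {y \<in> S. f y = f x} \<noteq> 0" using assms(1) by auto
  then show ?thesis using assms(2) unfolding has_content_def by simp
qed

lemma has_content_two_letter_le_one:
  assumes "finite S" "has_content S f (two_letter p q)" "x \<in> S"
  shows "f x \<le> 1"
  using has_content_nonzero[OF assms] by (auto simp: two_letter_def split: if_splits)

lemma finite_has_content_PiE: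
  assumes "finite S" "finite {k. \<alpha> k \<noteq> 0}"
  shows "finite {f \<in> S \<rightarrow>\<^sub>E UNIV. has_content S f \<alpha>}"
proof (rule finite_subset)
  show "{f \<in> S \<rightarrow>\<^sub>E UNIV. has_content S f \<alpha>} \<subseteq> S \<rightarrow>\<^sub>E {k. \<alpha> k \<noteq> 0}"
    using has_content_nonzero[OF assms(1)] by (auto simp: PiE_iff extensional_def)
  show "finite (S \<rightarrow>\<^sub>E {k. \<alpha> k \<noteq> 0})"
    using assms by (simp add: finite_PiE)
qed

lemma finite_two_letter_support: "finite {k. two_letter p q k \<noteq> 0}"
  by (rule finite_subset[of _ "{0, 1}"]) (auto simp: two_letter_def)

lemma down_closed_eq_lessThan_card:
  fixes S :: "nat set"
  assumes "finite S" and down: "\<And>i j. j \<in> S \<Longrightarrow> i < j \<Longrightarrow> i \<in> S"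
  shows "S = {..<card S}"
proof -
  have "S \<subseteq> {..<card S}"
  proof
    fix j assume "j \<in> S"
    then have "{..j} \<subseteq> S" using down by (auto simp: le_less)
    then have "card {..j} \<le> card S" using assms(1) card_mono by blast
    then show "j \<in> {..<card S}" by simp
  qed
  then show ?thesis by (simp add: card_subset_eq)
qed

lemma finite_young_cells: "finite (young_cells la)"
proof -
  have "young_cells la = Sigma {..<length la} (\<lambda>i. {..<la ! i})"
    unfolding young_cells_def by auto
  then show ?thesis by simp
qed

lemma young_cells_left_closed:
  "(i, j) \<in> young_cells la \<Longrightarrow> j' \<le> j \<Longrightarrow> (i, j') \<in> young_cells la"
  by (auto simp: young_cells_def)

lemma young_cells_up_closed:
  "sorted (rev la) \<Longrightarrow> (i + 1, j) \<in> young_cells la \<Longrightarrow> (i, j) \<in> young_cells la"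
  using sorted_rev_nth_mono[of la i "i + 1"] by (auto simp: young_cells_def)

lemma ssyt_row_mono:
  assumes "ssyt la T" "(i, j') \<in> young_cells la" "j \<le> j'"
  shows "T (i, j) \<le> T (i, j')"
  using assms(2,3)
proof (induction j')
  case (Suc j')
  show ?case
  proof (cases "j = Suc j'")
    case False
    then have "T (i, j) \<le> T (i, j')"
      using Suc young_cells_left_closed[of i "Suc j'" la j'] by simp
    also have "\<dots> \<le> T (i, Suc j')"
      using assms(1) Suc.prems(1) unfolding ssyt_def by simp
    finally show ?thesis .
  qed simp
qed simp

lemma ssyt_column_strict:
  "ssyt la T \<Longrightarrow> (i + 1, j) \<in> young_cells la \<Longrightarrow> T (i, j) < T (i + 1, j)"
  by (simp add: ssyt_def)

lemma ssyt_pos_below_first_row: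
  assumes "ssyt la T" "(i, j) \<in> young_cells la" "0 < i"
  shows "0 < T (i, j)"
proof -
  obtain i' where "i = i' + 1" using assms(3) by (metis Suc_eq_plus1 gr0_implies_Suc)
  then show ?thesis using ssyt_column_strict[of la T i' j] assms(1,2) by simp
qed

lemma ssyt_two_letter_zeros:
  assumes T: "ssyt la T" "has_content (young_cells la) T (two_letter p q)"
  shows "{c \<in> young_cells la. T c = 0} = {0} \<times> {..<p}"
proof -
  define Z where "Z = {j. (0, j) \<in> young_cells la \<and> T (0, j) = 0}"
  have zeros: "{c \<in> young_cells la. T c = 0} = {0} \<times> Z"
    using ssyt_pos_below_first_row[OF T(1)] by (force simp: Z_def)
  have "Z \<subseteq> {..<la ! 0}"
    by (auto simp: Z_def young_cells_def)
  then have "finite Z"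
    using finite_subset by blast
  have "Z = {..<card Z}"
  proof (rule down_closed_eq_lessThan_card[OF \<open>finite Z\<close>])
    fix i j assume "j \<in> Z" "i < j"
    then show "i \<in> Z"
      using ssyt_row_mono[OF T(1), of 0 j i] young_cells_left_closed[of 0 j la i]
      by (simp add: Z_def)
  qed
  moreover have "card Z = p"
  proof -
    have "card ({0::nat} \<times> Z) = card Z" by (simp add: card_cartesian_product)
    then show ?thesis using T(2) zeros unfolding has_content_def two_letter_def by metis
  qed
  ultimately show ?thesis using zeros by simp
qed

definition two_letter_tableau :: "nat list \<Rightarrow> nat \<Rightarrow> nat \<times> nat \<Rightarrow> nat" where
  "two_letter_tableau la m =
     restrict (\<lambda>c. if c \<in> {0} \<times> {..<m} then 0 else 1) (young_cells la)"

lemma ssyt_two_letter_eq_tableau: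
  assumes "ssyt la T" "has_content (young_cells la) T (two_letter p q)"
  shows "T = two_letter_tableau la p"
proof (rule PiE_ext)
  show "T \<in> young_cells la \<rightarrow>\<^sub>E UNIV" using assms(1) by (simp add: ssyt_def)
  show "two_letter_tableau la p \<in> young_cells la \<rightarrow>\<^sub>E UNIV"
    by (simp add: two_letter_tableau_def)
  fix c assume c: "c \<in> young_cells la"
  have "T c \<le> 1" using has_content_two_letter_le_one[OF finite_young_cells assms(2) c] .
  moreover have "T c = 0 \<longleftrightarrow> c \<in> {0} \<times> {..<p}"
    using c unfolding ssyt_two_letter_zeros[OF assms, symmetric] by simp
  ultimately show "T c = two_letter_tableau la p c"
    using c by (auto simp: two_letter_tableau_def)
qed

lemma schur_coeff_two_letter:
  "schur_coeff la (two_letter p q) =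
     of_bool (ssyt la (two_letter_tableau la p) \<and>
              has_content (young_cells la) (two_letter_tableau la p) (two_letter p q))"
proof -
  have "{T. ssyt la T \<and> has_content (young_cells la) T (two_letter p q)} =
        (if ssyt la (two_letter_tableau la p) \<and>
            has_content (young_cells la) (two_letter_tableau la p) (two_letter p q)
         then {two_letter_tableau la p} else {})"
    using ssyt_two_letter_eq_tableau by auto
  then show ?thesis by (simp add: schur_coeff_eq)
qed

lemma has_content_two_letter_tableau:
  assumes "{0} \<times> {..<m} \<subseteq> young_cells la"
  shows "has_content (young_cells la) (two_letter_tableau la m)
           (two_letter m (card (young_cells la) - m))"
  unfolding has_content_def
proof
  fix k
  let ?C = "young_cells la" and ?Z = "{0} \<times> {..<m}"
  have "{c \<in> ?C. two_letter_tableau la m c = k} =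
        (if k = 0 then ?Z else if k = 1 then ?C - ?Z else {})"
    using assms by (auto simp: two_letter_tableau_def)
  moreover have "card ?Z = m" by (simp add: card_cartesian_product)
  moreover have "card (?C - ?Z) = card ?C - m"
    using assms by (simp add: card_Diff_subset card_cartesian_product)
  ultimately show "card {c \<in> ?C. two_letter_tableau la m c = k} =
                   two_letter m (card ?C - m) k"
    by (simp add: two_letter_def)
qed

lemma ssyt_two_letter_tableau:
  assumes "{0} \<times> {..<m} \<subseteq> young_cells la"
    and "\<And>i j. (i + 1, j) \<in> young_cells la \<Longrightarrow> i = 0 \<and> j < m"
  shows "ssyt la (two_letter_tableau la m)"
  unfolding ssyt_def
proof (intro conjI allI impI)
  show "two_letter_tableau la m \<in> young_cells la \<rightarrow>\<^sub>E UNIV"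
    by (simp add: two_letter_tableau_def)
next
  fix i j assume "(i, j + 1) \<in> young_cells la"
  then show "two_letter_tableau la m (i, j) \<le> two_letter_tableau la m (i, j + 1)"
    using young_cells_left_closed[of i "j + 1" la j] by (auto simp: two_letter_tableau_def)
next
  fix i j assume below: "(i + 1, j) \<in> young_cells la"
  then have "i = 0" "j < m" using assms(2) by blast+
  then have "(0, j) \<in> young_cells la" using assms(1) by blast
  then show "two_letter_tableau la m (i, j) < two_letter_tableau la m (i + 1, j)"
    using below \<open>i = 0\<close> \<open>j < m\<close> by (simp add: two_letter_tableau_def)
qed

lemma ssyt_two_letter_card_young_cells:
  assumes "ssyt la T" "has_content (young_cells la) T (two_letter p q)"
  shows "card (young_cells la) = p + q"
proof -
  let ?C = "young_cells la"
  let ?Z = "{c \<in> ?C. T c = 0}" and ?O = "{c \<in> ?C. T c = 1}"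
  have "?C = ?Z \<union> ?O"
    using has_content_two_letter_le_one[OF finite_young_cells assms(2)] by (auto simp: le_Suc_eq)
  then have "card ?C = card (?Z \<union> ?O)" by (rule arg_cong)
  also have "\<dots> = card ?Z + card ?O"
    by (rule card_Un_disjoint) (auto simp: finite_young_cells)
  also have "\<dots> = p + q"
    using assms(2) by (simp add: has_content_def two_letter_def)
  finally show ?thesis .
qed

text \<open>Sortedness is needed because the column condition of \<^const>\<open>ssyt\<close> also constrains
  \<open>T (i, j)\<close> when \<open>(i, j)\<close> lies outside the diagram.\<close>
lemma ssyt_two_letter_below_first_row:
  assumes "sorted (rev la)" "ssyt la T" "has_content (young_cells la) T (two_letter p q)"
    and "(i + 1, j) \<in> young_cells la"
  shows "i = 0 \<and> j < q"
proof
  let ?C = "young_cells la"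
  have le_one: "T c \<le> 1" if "c \<in> ?C" for c
    using has_content_two_letter_le_one[OF finite_young_cells assms(3) that] .
  have "(i, j) \<in> ?C" using young_cells_up_closed[OF assms(1,4)] .
  moreover have "T (i, j) < T (i + 1, j)" using ssyt_column_strict[OF assms(2,4)] .
  ultimately have "(i, j) \<in> {c \<in> ?C. T c = 0}" using le_one[OF assms(4)] by simp
  then show "i = 0" unfolding ssyt_two_letter_zeros[OF assms(2,3)] by simp
  have "{1} \<times> {..j} \<subseteq> {c \<in> ?C. T c = 1}"
  proof
    fix c assume "c \<in> {1::nat} \<times> {..j}"
    then obtain j' where c: "c = (1, j')" "j' \<le> j" by blast
    then have "c \<in> ?C" using assms(4) \<open>i = 0\<close> young_cells_left_closed by simp
    then show "c \<in> {c \<in> ?C. T c = 1}"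
      using c ssyt_pos_below_first_row[OF assms(2), of 1 j'] le_one by fastforce
  qed
  then have "card ({1::nat} \<times> {..j}) \<le> card {c \<in> ?C. T c = 1}"
    by (rule card_mono[rotated]) (simp add: finite_young_cells)
  then show "j < q"
    using assms(3) by (simp add: card_cartesian_product has_content_def two_letter_def)
qed

lemma schur_coeff_two_letter_mono:
  assumes "sorted (rev la)" "q + 2 \<le> p"
  shows "schur_coeff la (two_letter p q) \<le> schur_coeff la (two_letter (p - 1) (q + 1))"
proof (cases "schur_coeff la (two_letter p q) = 0")
  case False
  let ?C = "young_cells la" and ?T = "two_letter_tableau la p"
  have T: "ssyt la ?T" "has_content ?C ?T (two_letter p q)"
    using False by (simp_all add: schur_coeff_two_letter split: if_splits)
  have "{0} \<times> {..<p} \<subseteq> ?C" unfolding ssyt_two_letter_zeros[OF T, symmetric] by blast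
  then have first_row: "{0} \<times> {..<p - 1} \<subseteq> ?C" by auto
  have below_first_row: "i = 0 \<and> j < p - 1" if "(i + 1, j) \<in> ?C" for i j
    using ssyt_two_letter_below_first_row[OF assms(1) T that] assms(2) by linarith
  have "ssyt la (two_letter_tableau la (p - 1))"
    using ssyt_two_letter_tableau[OF first_row below_first_row] .
  moreover have "has_content ?C (two_letter_tableau la (p - 1)) (two_letter (p - 1) (q + 1))"
    using has_content_two_letter_tableau[OF first_row] ssyt_two_letter_card_young_cells[OF T]
      assms(2)
    by simp
  ultimately show ?thesis by (simp add: schur_coeff_two_letter)
qed (simp add: schur_coeff_eq)

lemma stable_bipartition_swap:
  "stable_bipartition V E A B \<Longrightarrow> stable_bipartition V E B A"
  by (auto simp: stable_bipartition_def)

lemma stable_bipartition_edge: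
  assumes "stable_bipartition V E A B" "u \<in> V" "v \<in> V" "E u v"
  shows "u \<in> A \<longleftrightarrow> v \<notin> A"
  using assms unfolding stable_bipartition_def stable_set_def by blast

lemma two_coloring_class_eq_part:
  assumes "simple_graph V E" "connected_graph V E" "stable_bipartition V E A B"
    and "proper_coloring V E \<kappa>" "\<forall>v\<in>V. \<kappa> v \<le> 1" "a \<in> A"
  shows "{v \<in> V. \<kappa> v = \<kappa> a} = A"
proof -
  have "A \<subseteq> V" using assms(3) by (auto simp: stable_bipartition_def)
  then have "a \<in> V" using assms(6) by blast
  have "\<kappa> v = \<kappa> a \<longleftrightarrow> v \<in> A" if "E\<^sup>*\<^sup>* a v" "v \<in> V" for v
    using that
  proof (induction rule: rtranclp_induct)
    case (step v w)
    have "v \<in> V" using assms(1) step(2) by (simp add: simple_graph_def)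
    have "\<kappa> v \<noteq> \<kappa> w"
      using assms(4) step(2) \<open>v \<in> V\<close> step(4) by (simp add: proper_coloring_def)
    moreover have "\<kappa> v \<le> 1" "\<kappa> w \<le> 1" "\<kappa> a \<le> 1"
      using assms(5) \<open>v \<in> V\<close> step(4) \<open>a \<in> V\<close> by auto
    ultimately show ?case
      using step.IH \<open>v \<in> V\<close> stable_bipartition_edge[OF assms(3) \<open>v \<in> V\<close> step(4) step(2)]
      by auto
  qed (simp add: assms(6))
  then show ?thesis
    using assms(2) \<open>a \<in> V\<close> \<open>A \<subseteq> V\<close> by (auto simp: connected_graph_def)
qed

lemma chrom_sym_coeff_two_letter_eq_zero:
  assumes "simple_graph V E" "connected_graph V E" "stable_bipartition V E A B"
    and "A \<noteq> {}" "card A \<noteq> p" "card A \<noteq> q"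
  shows "chrom_sym_coeff V E (two_letter p q) = 0"
proof -
  have "finite V" using assms(1) by (simp add: simple_graph_def)
  obtain a where "a \<in> A" using assms(4) by blast
  have "\<not> (proper_coloring V E \<kappa> \<and> has_content V \<kappa> (two_letter p q))" for \<kappa>
  proof
    assume \<kappa>: "proper_coloring V E \<kappa> \<and> has_content V \<kappa> (two_letter p q)"
    then have "\<forall>v\<in>V. \<kappa> v \<le> 1"
      using has_content_two_letter_le_one[OF \<open>finite V\<close>] by blast
    then have "card {v \<in> V. \<kappa> v = \<kappa> a} = card A"
      using two_coloring_class_eq_part[OF assms(1-3)] \<kappa> \<open>a \<in> A\<close> by simp
    moreover have "card {v \<in> V. \<kappa> v = \<kappa> a} = two_letter p q (\<kappa> a)"
      using \<kappa> by (simp add: has_content_def)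
    moreover have "\<kappa> a \<le> 1" using \<open>\<forall>v\<in>V. \<kappa> v \<le> 1\<close> \<open>a \<in> A\<close> assms(3)
      by (auto simp: stable_bipartition_def)
    ultimately show False
      using assms(5,6) by (auto simp: two_letter_def le_Suc_eq)
  qed
  then have no_coloring:
    "{\<kappa> \<in> V \<rightarrow>\<^sub>E UNIV. proper_coloring V E \<kappa> \<and> has_content V \<kappa> (two_letter p q)} = {}"
    by blast
  show ?thesis unfolding chrom_sym_coeff_eq no_coloring by simp
qed

lemma chrom_sym_coeff_bipartition_pos:
  assumes "finite V" "stable_bipartition V E A B"
  shows "0 < chrom_sym_coeff V E (two_letter (card A) (card B))"
proof -
  let ?S = "{\<kappa> \<in> V \<rightarrow>\<^sub>E UNIV.
             proper_coloring V E \<kappa> \<and> has_content V \<kappa> (two_letter (card A) (card B))}"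
  define \<kappa> where "\<kappa> = restrict (\<lambda>v. if v \<in> A then 0 else 1 :: nat) V"
  have "proper_coloring V E \<kappa>"
    using stable_bipartition_edge[OF assms(2)] by (auto simp: proper_coloring_def \<kappa>_def)
  moreover have "has_content V \<kappa> (two_letter (card A) (card B))"
    unfolding has_content_def
  proof
    fix k
    have "{v \<in> V. \<kappa> v = k} = (if k = 0 then A else if k = 1 then B else {})"
      using assms(2) by (auto simp: \<kappa>_def stable_bipartition_def)
    then show "card {v \<in> V. \<kappa> v = k} = two_letter (card A) (card B) k"
      by (simp add: two_letter_def)
  qed
  moreover have "\<kappa> \<in> V \<rightarrow>\<^sub>E UNIV" by (simp add: \<kappa>_def)
  ultimately have "\<kappa> \<in> ?S" by blast
  moreover have "?S \<subseteq> {\<kappa> \<in> V \<rightarrow>\<^sub>E UNIV. has_content V \<kappa> (two_letter (card A) (card B))}"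
    by blast
  then have "finite ?S"
    using finite_has_content_PiE[OF assms(1) finite_two_letter_support] by (rule finite_subset)
  ultimately show ?thesis by (auto simp: chrom_sym_coeff_eq card_gt_0_iff)
qed

lemma schur_positive_two_letter_mono:
  assumes "schur_positive V E" "q + 2 \<le> p"
  shows "chrom_sym_coeff V E (two_letter p q) \<le> chrom_sym_coeff V E (two_letter (p - 1) (q + 1))"
proof -
  obtain c where c: "\<forall>la. 0 \<le> c la"
    "\<forall>\<alpha>. chrom_sym_coeff V E \<alpha> = (\<Sum>la\<in>partitions_of (card V). c la * schur_coeff la \<alpha>)"
    using assms(1) unfolding schur_positive_def by blast
  show ?thesis
    unfolding c(2)[rule_format]
  proof (rule sum_mono)
    fix la assume "la \<in> partitions_of (card V)"
    then have "sorted (rev la)" by (simp add: partitions_of_def)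
    then have "schur_coeff la (two_letter p q) \<le> schur_coeff la (two_letter (p - 1) (q + 1))"
      using assms(2) by (rule schur_coeff_two_letter_mono)
    then show "c la * schur_coeff la (two_letter p q) \<le>
               c la * schur_coeff la (two_letter (p - 1) (q + 1))"
      using c(1) by (simp add: mult_left_mono)
  qed
qed

lemma schur_positive_part_card_le:
  assumes "simple_graph V E" "connected_graph V E" "schur_positive V E"
    and "stable_bipartition V E A B"
  shows "card A \<le> card B + 1"
proof (rule ccontr)
  assume "\<not> ?thesis"
  then have unbalanced: "card B + 2 \<le> card A" by simp
  then have "A \<noteq> {}" by auto
  have "finite V" using assms(1) by (simp add: simple_graph_def)
  have "0 < chrom_sym_coeff V E (two_letter (card A) (card B))"
    using chrom_sym_coeff_bipartition_pos[OF \<open>finite V\<close> assms(4)] .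
  also have "\<dots> \<le> chrom_sym_coeff V E (two_letter (card A - 1) (card B + 1))"
    using schur_positive_two_letter_mono[OF assms(3) unbalanced] .
  also have "\<dots> = 0"
    using chrom_sym_coeff_two_letter_eq_zero[OF assms(1,2,4) \<open>A \<noteq> {}\<close>] unbalanced by simp
  finally show False by simp
qed

theorem theorem3p3:
  fixes V :: "'a set" and E :: "'a \<Rightarrow> 'a \<Rightarrow> bool"
  assumes "simple_graph V E"
    and "connected_graph V E"
    and "bipartite V E"
    and "schur_positive V E"
  shows "\<exists>A B. stable_bipartition V E A B \<and>
           (card A = card B \<or> card A = card B + 1 \<or> card B = card A + 1)"
proof -
  obtain A B where AB: "stable_bipartition V E A B"
    using assms(3) unfolding bipartite_def by blast
  have "card A \<le> card B + 1"
    using schur_positive_part_card_le[OF assms(1,2,4) AB] .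
  moreover have "card B \<le> card A + 1"
    using schur_positive_part_card_le[OF assms(1,2,4) stable_bipartition_swap[OF AB]] .
  ultimately have "card A = card B \<or> card A = card B + 1 \<or> card B = card A + 1" by linarith
  with AB show ?thesis by blast
qed

end
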